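(* Let $V:\mathbb{R}^{d_1}\times\mathbb{R}^{d_2}\to\mathbb{R}^n$ be residual-homogeneous, $V(\theta_1,\theta_2)=\Phi\theta_1+g(\theta_2)$, where $\Phi\in\mathbb{R}^{n\times d_1}$ has full rank and $g$ is continuously differentiable and $h$-homogeneous, and suppose there are constants $C,\ell>0$ with $\Vert V(\theta)\Vert_\mu\le C\Vert\theta\Vert^\ell$ for all $\theta$. Let $\Pi_\Phi$ be the projection onto the column span of $\Phi$. Then for any initial condition, if $\theta(t)$ follows $\dot\theta=-\nabla V(\theta)^T A\,(V(\theta)-V^* )$, we have $$\liminf_{t\to\infty}\Vert V(\theta(t))-V^*\Vert_\mu\le\Big(1+\frac{1+\gamma}{1-\gamma}\Big)\Vert V^*-\Pi_\Phi V^*\Vert_\mu.$$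
   Context: A Markov reward process has finite state space with $n$ states, transition matrix $P$ defining an irreducible, aperiodic Markov chain with stationary distribution $\mu$, a finite reward function $r(s,s')$, and discount factor $\gamma\in[0,1)$. Let $R(s)=\mathbb{E}_{s'\sim P(\cdot|s)}[r(s,s')]$ and let $V^*\in\mathbb{R}^n$ be the unique solution of $V^*=R+\gamma PV^*$. Let $D_\mu=\mathrm{diag}(\mu)$ and $A:=D_\mu(I-\gamma P)$. For $x\in\mathbb{R}^n$, $\Vert x\Vert_\mu^2=x^TD_\mu x$; $\Vert\theta\Vert$ is the Euclidean norm. $\nabla V(\theta)$ is the Jacobian of $V$ with respect to $\theta=(\theta_1,\theta_2)$. A differentiable $f:\mathbb{R}^k\to\mathbb{R}^m$ is $h$-homogeneous (for $h\in\mathbb{R}$) if $f(x)=h\,\nabla f(x)\,x$ for all $x$. The projection $\Pi_\Phi$ is taken orthogonal with respect to $\langle x,y\rangle_\mu=x^TD_\mu y$. *)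

theory Defs
  imports "HOL-Analysis.Analysis"
begin

primrec mat_pow :: "real^'n^'n \<Rightarrow> nat \<Rightarrow> real^'n^'n" where
  "mat_pow P 0 = mat 1"
| "mat_pow P (Suc k) = mat_pow P k ** P"

(* row-stochastic transition matrix: P $ s $ s' = P(s'|s) *)
definition stochastic_matrix :: "real^'n^'n \<Rightarrow> bool" where
  "stochastic_matrix P \<longleftrightarrow> (\<forall>i j. P $ i $ j \<ge> 0) \<and> (\<forall>i. (\<Sum>j\<in>UNIV. P $ i $ j) = 1)"

definition irreducible_chain :: "real^'n^'n \<Rightarrow> bool" where
  "irreducible_chain P \<longleftrightarrow> (\<forall>i j. \<exists>k. mat_pow P k $ i $ j > 0)"

definition aperiodic_chain :: "real^'n^'n \<Rightarrow> bool" where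
  "aperiodic_chain P \<longleftrightarrow> (\<forall>i. Gcd {k. k > 0 \<and> mat_pow P k $ i $ i > 0} = (1::nat))"

definition stationary_distribution :: "real^'n^'n \<Rightarrow> real^'n \<Rightarrow> bool" where
  "stationary_distribution P \<mu> \<longleftrightarrow>
     (\<forall>i. \<mu> $ i \<ge> 0) \<and> (\<Sum>i\<in>UNIV. \<mu> $ i) = 1 \<and> \<mu> v* P = \<mu>"

definition diag_mat :: "real^'n \<Rightarrow> real^'n^'n" where
  "diag_mat \<mu> = (\<chi> i j. if i = j then \<mu> $ i else 0)"

definition inner_mu :: "real^'n \<Rightarrow> real^'n \<Rightarrow> real^'n \<Rightarrow> real" where
  "inner_mu \<mu> x y = (\<Sum>i\<in>UNIV. \<mu> $ i * x $ i * y $ i)"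

definition norm_mu :: "real^'n \<Rightarrow> real^'n \<Rightarrow> real" where
  "norm_mu \<mu> x = sqrt (inner_mu \<mu> x x)"

definition proj_mu :: "real^'n \<Rightarrow> real^'d^'n \<Rightarrow> real^'n \<Rightarrow> real^'n" where
  "proj_mu \<mu> \<Phi> x = (THE y. y \<in> range (\<lambda>w. \<Phi> *v w) \<and> (\<forall>w. inner_mu \<mu> (x - y) (\<Phi> *v w) = 0))"

end

theory Submission
  imports Defs
begin

(* Let Phi w = Pi_Phi Vstar and take the Lyapunov function L = |theta_1 - w|^2 + max h 0 * |theta_2|^2.
   By homogeneity (and g = 0 when h <= 0) the gradient of L pairs with the flow to give
   L' = -2 <V - Pi_Phi Vstar, (I - gamma P)(V - Vstar)>_mu.  Stationarity of mu and Jensen's inequality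
   make P a contraction for the mu-norm, so with e = V - Vstar and eps = Vstar - Pi_Phi Vstar,
   L' <= -2 |e| ((1 - gamma) |e| - (1 + gamma) |eps|).  A nonnegative L cannot decrease at a
   uniform rate forever, hence |e| drops below every bound exceeding (1 + gamma)/(1 - gamma) |eps|
   at arbitrarily late times. *)

definition sqrt_diag :: "real^'n \<Rightarrow> real^'n \<Rightarrow> real^'n" where
  "sqrt_diag \<mu> x = (\<chi> i. sqrt (\<mu> $ i) * x $ i)"

lemma linear_sqrt_diag: "linear (sqrt_diag \<mu>)"
  by (rule linearI) (simp_all add: sqrt_diag_def vec_eq_iff algebra_simps)

lemma inner_mu_eq_inner_sqrt_diag:
  assumes "\<forall>i. 0 \<le> \<mu> $ i"
  shows "inner_mu \<mu> x y = sqrt_diag \<mu> x \<bullet> sqrt_diag \<mu> y"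
  unfolding inner_mu_def sqrt_diag_def inner_vec_def
  by (rule sum.cong) (use assms in \<open>auto simp: real_sqrt_mult[symmetric]\<close>)

lemma norm_mu_eq_norm_sqrt_diag:
  assumes "\<forall>i. 0 \<le> \<mu> $ i"
  shows "norm_mu \<mu> x = norm (sqrt_diag \<mu> x)"
  unfolding norm_mu_def inner_mu_eq_inner_sqrt_diag[OF assms] norm_eq_sqrt_inner ..

lemma norm_mu_nonneg:
  assumes "\<forall>i. 0 \<le> \<mu> $ i"
  shows "0 \<le> norm_mu \<mu> x"
  using assms by (simp add: norm_mu_eq_norm_sqrt_diag)

lemma inner_mu_self_eq_power2:
  assumes "\<forall>i. 0 \<le> \<mu> $ i"
  shows "inner_mu \<mu> x x = (norm_mu \<mu> x)\<^sup>2"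
  using assms by (simp add: inner_mu_eq_inner_sqrt_diag norm_mu_eq_norm_sqrt_diag power2_norm_eq_inner)

lemma abs_inner_mu_le:
  assumes "\<forall>i. 0 \<le> \<mu> $ i"
  shows "\<bar>inner_mu \<mu> x y\<bar> \<le> norm_mu \<mu> x * norm_mu \<mu> y"
  using assms by (simp add: inner_mu_eq_inner_sqrt_diag norm_mu_eq_norm_sqrt_diag Cauchy_Schwarz_ineq2)

lemma inner_mu_simps:
  "inner_mu \<mu> (x + y) z = inner_mu \<mu> x z + inner_mu \<mu> y z"
  "inner_mu \<mu> (x - y) z = inner_mu \<mu> x z - inner_mu \<mu> y z"
  "inner_mu \<mu> z (x + y) = inner_mu \<mu> z x + inner_mu \<mu> z y"
  "inner_mu \<mu> z (x - y) = inner_mu \<mu> z x - inner_mu \<mu> z y"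
  "inner_mu \<mu> (c *\<^sub>R x) z = c * inner_mu \<mu> x z"
  "inner_mu \<mu> z (c *\<^sub>R x) = c * inner_mu \<mu> z x"
  unfolding inner_mu_def by (auto simp: algebra_simps sum.distrib sum_subtractf sum_distrib_left)

lemma inner_diag_mat_mult:
  "u \<bullet> ((diag_mat \<mu> ** M) *v x) = inner_mu \<mu> u (M *v x)"
proof -
  have "(\<Sum>j\<in>UNIV. (if i = j then \<mu> $ i else 0) * y $ j) = \<mu> $ i * y $ i" for i and y :: "real^'a"
    by (simp add: if_distrib[of "\<lambda>x. x * _"] cong: if_cong)
  then have "diag_mat \<mu> *v y = (\<chi> i. \<mu> $ i * y $ i)" for y :: "real^'a"
    by (simp add: vec_eq_iff matrix_vector_mult_def diag_mat_def)
  then show ?thesis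
    by (simp add: matrix_vector_mul_assoc[symmetric] inner_vec_def inner_mu_def algebra_simps)
qed

lemma power2_weighted_sum_le:
  fixes p x :: "'a \<Rightarrow> real"
  assumes "finite I" "\<forall>j\<in>I. 0 \<le> p j" "sum p I = 1"
  shows "(\<Sum>j\<in>I. p j * x j)\<^sup>2 \<le> (\<Sum>j\<in>I. p j * (x j)\<^sup>2)"
proof -
  define m where "m = (\<Sum>j\<in>I. p j * x j)"
  have "0 \<le> (\<Sum>j\<in>I. p j * (x j - m)\<^sup>2)"
    using assms by (intro sum_nonneg) auto
  also have "\<dots> = (\<Sum>j\<in>I. p j * (x j)\<^sup>2) - 2 * m * m + m\<^sup>2 * sum p I"
    by (simp add: power2_diff algebra_simps sum.distrib sum_subtractf sum_distrib_left sum_distrib_right m_def)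
  finally show ?thesis
    using assms(3) by (simp add: m_def power2_eq_square)
qed

lemma norm_mu_stochastic_le:
  assumes stoch: "stochastic_matrix P" and stat: "stationary_distribution P \<mu>"
  shows "norm_mu \<mu> (P *v x) \<le> norm_mu \<mu> x"
proof -
  have mu_nonneg: "\<forall>i. 0 \<le> \<mu> $ i" and mu_P: "\<mu> v* P = \<mu>"
    using stat by (auto simp: stationary_distribution_def)
  have "inner_mu \<mu> (P *v x) (P *v x) = (\<Sum>i\<in>UNIV. \<mu> $ i * (\<Sum>j\<in>UNIV. P $ i $ j * x $ j)\<^sup>2)"
    by (simp add: inner_mu_def matrix_vector_mult_def power2_eq_square mult.assoc)
  also have "\<dots> \<le> (\<Sum>i\<in>UNIV. \<mu> $ i * (\<Sum>j\<in>UNIV. P $ i $ j * (x $ j)\<^sup>2))"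
    using stoch mu_nonneg unfolding stochastic_matrix_def
    by (intro sum_mono mult_left_mono power2_weighted_sum_le) auto
  also have "\<dots> = (\<Sum>j\<in>UNIV. \<Sum>i\<in>UNIV. \<mu> $ i * P $ i $ j * (x $ j)\<^sup>2)"
    by (subst sum.swap) (simp add: sum_distrib_left mult.assoc)
  also have "\<dots> = (\<Sum>j\<in>UNIV. (\<mu> v* P) $ j * (x $ j)\<^sup>2)"
    by (simp add: vector_matrix_mult_def sum_distrib_right)
  also have "\<dots> = inner_mu \<mu> x x"
    using mu_P by (simp add: inner_mu_def power2_eq_square mult.assoc)
  finally show ?thesis
    unfolding norm_mu_def by simp
qed

lemma mat_pow_nonneg:
  assumes "stochastic_matrix P"
  shows "0 \<le> mat_pow P k $ i $ j"
  using assms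
  by (induction k arbitrary: i j) (auto simp: mat_def stochastic_matrix_def matrix_matrix_mult_def sum_nonneg)

lemma stationary_distribution_mat_pow:
  assumes "stationary_distribution P \<mu>"
  shows "\<mu> v* mat_pow P k = \<mu>"
  using assms
  by (induction k) (simp_all add: vector_matrix_mul_rid vector_matrix_mul_assoc[symmetric] stationary_distribution_def)

lemma stationary_distribution_pos:
  assumes stoch: "stochastic_matrix P" and irred: "irreducible_chain P"
    and stat: "stationary_distribution P \<mu>"
  shows "0 < \<mu> $ j"
proof -
  have mu_nonneg: "\<forall>i. 0 \<le> \<mu> $ i" and "(\<Sum>i\<in>UNIV. \<mu> $ i) = 1"
    using stat by (auto simp: stationary_distribution_def)
  then obtain i where i: "0 < \<mu> $ i"
    by (metis less_eq_real_def sum.neutral zero_neq_one)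
  obtain k where k: "0 < mat_pow P k $ i $ j"
    using irred unfolding irreducible_chain_def by blast
  have "\<mu> $ j = (\<Sum>l\<in>UNIV. mat_pow P k $ l $ j * \<mu> $ l)"
    using stationary_distribution_mat_pow[OF stat, of k]
    by (simp add: vec_eq_iff vector_matrix_mult_def mult.commute)
  also have "\<dots> \<ge> mat_pow P k $ i $ j * \<mu> $ i"
    by (rule member_le_sum) (use mu_nonneg mat_pow_nonneg[OF stoch] in auto)
  finally show ?thesis
    using i k by (smt (verit) mult_pos_pos)
qed

lemma proj_mu_exists:
  fixes \<Phi> :: "real^'d^'n"
  assumes "\<forall>i. 0 \<le> \<mu> $ i"
  shows "\<exists>w. \<forall>v. inner_mu \<mu> (x - \<Phi> *v w) (\<Phi> *v v) = 0"
proof -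
  let ?S = "sqrt_diag \<mu> ` range (\<lambda>w. \<Phi> *v w)"
  have "subspace ?S"
    by (intro linear_subspace_image linear_sqrt_diag subspace_UNIV matrix_vector_mul_linear)
  moreover obtain y z where "y \<in> span ?S" and z: "\<And>u. u \<in> span ?S \<Longrightarrow> orthogonal z u"
    and xyz: "sqrt_diag \<mu> x = y + z"
    using orthogonal_subspace_decomp_exists by metis
  ultimately obtain w where w: "y = sqrt_diag \<mu> (\<Phi> *v w)"
    by (metis (no_types, lifting) imageE span_eq_iff)
  have "inner_mu \<mu> (x - \<Phi> *v w) (\<Phi> *v v) = 0" for v
  proof -
    have "sqrt_diag \<mu> (\<Phi> *v v) \<in> span ?S"
      by (intro span_base imageI rangeI)
    then show ?thesis
      using xyz w z by (simp add: assms inner_mu_eq_inner_sqrt_diag linear_diff[OF linear_sqrt_diag] orthogonal_def)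
  qed
  then show ?thesis by blast
qed

lemma proj_mu_unique:
  fixes \<Phi> :: "real^'d^'n"
  assumes pos: "\<forall>i. 0 < \<mu> $ i"
    and orth1: "\<forall>v. inner_mu \<mu> (x - \<Phi> *v w1) (\<Phi> *v v) = 0"
    and orth2: "\<forall>v. inner_mu \<mu> (x - \<Phi> *v w2) (\<Phi> *v v) = 0"
  shows "\<Phi> *v w1 = \<Phi> *v w2"
proof -
  define d where "d = \<Phi> *v w1 - \<Phi> *v w2"
  have "d = \<Phi> *v (w1 - w2)"
    by (simp add: d_def matrix_vector_mult_diff_distrib)
  have "inner_mu \<mu> d d = inner_mu \<mu> (x - \<Phi> *v w2) d - inner_mu \<mu> (x - \<Phi> *v w1) d"
    by (simp add: d_def inner_mu_simps)
  also have "\<dots> = 0"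
    using orth1 orth2 \<open>d = \<Phi> *v (w1 - w2)\<close> by simp
  finally have "(\<Sum>i\<in>UNIV. \<mu> $ i * (d $ i)\<^sup>2) = 0"
    by (simp add: inner_mu_def power2_eq_square mult.assoc)
  then have "\<forall>i. \<mu> $ i * (d $ i)\<^sup>2 = 0"
    using pos by (subst (asm) sum_nonneg_eq_0_iff) (auto simp: less_imp_le)
  then have "d = 0"
    using pos by (simp add: vec_eq_iff) (metis less_irrefl)
  then show ?thesis by (simp add: d_def)
qed

lemma proj_mu_in_range:
  fixes \<Phi> :: "real^'d^'n"
  assumes pos: "\<forall>i. 0 < \<mu> $ i"
  shows "proj_mu \<mu> \<Phi> x \<in> range (\<lambda>w. \<Phi> *v w)"
proof -
  have "\<forall>i. 0 \<le> \<mu> $ i"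
    using pos by (simp add: less_imp_le)
  then obtain w where w: "\<forall>v. inner_mu \<mu> (x - \<Phi> *v w) (\<Phi> *v v) = 0"
    using proj_mu_exists by blast
  have "\<exists>!y. y \<in> range (\<lambda>w. \<Phi> *v w) \<and> (\<forall>v. inner_mu \<mu> (x - y) (\<Phi> *v v) = 0)"
  proof (rule ex1I[of _ "\<Phi> *v w"])
    fix y
    assume "y \<in> range (\<lambda>w. \<Phi> *v w) \<and> (\<forall>v. inner_mu \<mu> (x - y) (\<Phi> *v v) = 0)"
    then show "y = \<Phi> *v w"
      using proj_mu_unique[OF pos _ w] by auto
  qed (use w in auto)
  then show ?thesis
    unfolding proj_mu_def by (rule conjunct1[OF theI'])
qed

lemma abs_inner_mu_stochastic_le:
  assumes "stochastic_matrix P" and stat: "stationary_distribution P \<mu>"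
  shows "\<bar>inner_mu \<mu> u (P *v x)\<bar> \<le> norm_mu \<mu> u * norm_mu \<mu> x"
proof -
  have mu_nonneg: "\<forall>i. 0 \<le> \<mu> $ i"
    using stat by (simp add: stationary_distribution_def)
  have "\<bar>inner_mu \<mu> u (P *v x)\<bar> \<le> norm_mu \<mu> u * norm_mu \<mu> (P *v x)"
    by (rule abs_inner_mu_le[OF mu_nonneg])
  also have "\<dots> \<le> norm_mu \<mu> u * norm_mu \<mu> x"
    using norm_mu_stochastic_le[OF assms] norm_mu_nonneg[OF mu_nonneg] by (rule mult_left_mono)
  finally show ?thesis .
qed

lemma inner_mu_discounted_diff_ge:
  assumes stoch: "stochastic_matrix P" and stat: "stationary_distribution P \<mu>" and "0 \<le> \<gamma>"
  shows "norm_mu \<mu> e * ((1 - \<gamma>) * norm_mu \<mu> e - (1 + \<gamma>) * norm_mu \<mu> u)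
      \<le> inner_mu \<mu> (e + u) (e - \<gamma> *\<^sub>R (P *v e))"
proof -
  have mu_nonneg: "\<forall>i. 0 \<le> \<mu> $ i"
    using stat by (simp add: stationary_distribution_def)
  have "\<gamma> * inner_mu \<mu> w (P *v e) \<le> \<gamma> * (norm_mu \<mu> w * norm_mu \<mu> e)" for w
    using abs_inner_mu_stochastic_le[OF stoch stat, of w e] \<open>0 \<le> \<gamma>\<close>
    by (intro mult_left_mono) auto
  moreover have "- (norm_mu \<mu> u * norm_mu \<mu> e) \<le> inner_mu \<mu> u e"
    using abs_inner_mu_le[OF mu_nonneg, of u e] by linarith
  moreover have "inner_mu \<mu> (e + u) (e - \<gamma> *\<^sub>R (P *v e))
      = inner_mu \<mu> e e - \<gamma> * inner_mu \<mu> e (P *v e) + inner_mu \<mu> u e - \<gamma> * inner_mu \<mu> u (P *v e)"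
    by (simp add: inner_mu_simps algebra_simps)
  moreover have "inner_mu \<mu> e e = norm_mu \<mu> e * norm_mu \<mu> e"
    by (simp add: inner_mu_self_eq_power2[OF mu_nonneg] power2_eq_square)
  moreover have "norm_mu \<mu> e * ((1 - \<gamma>) * norm_mu \<mu> e - (1 + \<gamma>) * norm_mu \<mu> u)
      = norm_mu \<mu> e * norm_mu \<mu> e - \<gamma> * (norm_mu \<mu> e * norm_mu \<mu> e)
        - norm_mu \<mu> u * norm_mu \<mu> e - \<gamma> * (norm_mu \<mu> u * norm_mu \<mu> e)"
    by (simp add: algebra_simps)
  ultimately show ?thesis
    by (smt (verit))
qed

lemma homogeneous_scaled_has_derivative_0:
  fixes g :: "'a::real_normed_vector \<Rightarrow> 'b::real_normed_vector"
  assumes deriv: "\<And>x. (g has_derivative g' x) (at x)"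
    and hom: "\<And>x. g x = h *\<^sub>R g' x x" and a: "a * h = -1" and t: "0 < t"
  shows "((\<lambda>t. t powr a *\<^sub>R g (t *\<^sub>R x)) has_derivative (\<lambda>_. 0)) (at t)"
proof -
  let ?u = "g' (t *\<^sub>R x) x"
  have lin: "linear (g' (t *\<^sub>R x))"
    using deriv has_derivative_linear by blast
  have "((\<lambda>t. g (t *\<^sub>R x)) has_derivative (\<lambda>s. g' (t *\<^sub>R x) (s *\<^sub>R x))) (at t)"
    by (rule has_derivative_compose[OF bounded_linear_imp_has_derivative[OF bounded_linear_scaleR_left] deriv])
  moreover have "((\<lambda>t. t powr a) has_derivative (\<lambda>s. a * t powr (a - 1) * s)) (at t)"
    using has_real_derivative_powr[OF t, of a] by (simp add: has_field_derivative_def)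
  ultimately have "((\<lambda>t. t powr a *\<^sub>R g (t *\<^sub>R x)) has_derivative
      (\<lambda>s. t powr a *\<^sub>R g' (t *\<^sub>R x) (s *\<^sub>R x) + (a * t powr (a - 1) * s) *\<^sub>R g (t *\<^sub>R x))) (at t)"
    by (rule has_derivative_scaleR[rotated])
  moreover have "t powr a *\<^sub>R g' (t *\<^sub>R x) (s *\<^sub>R x) + (a * t powr (a - 1) * s) *\<^sub>R g (t *\<^sub>R x) = 0" for s
  proof -
    have "g (t *\<^sub>R x) = (h * t) *\<^sub>R ?u"
      using hom[of "t *\<^sub>R x"] linear_scale[OF lin] by simp
    moreover have "a * t powr (a - 1) * s * (h * t) = - (t powr a * s)"
    proof -
      have "a * t powr (a - 1) * s * (h * t) = (a * h) * (t powr (a - 1) * t) * s"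
        by (simp only: ac_simps)
      also have "\<dots> = - (t powr a * s)"
        using a t by (simp add: powr_diff)
      finally show ?thesis .
    qed
    ultimately show ?thesis
      using linear_scale[OF lin] by (simp add: scaleR_add_left[symmetric] del: scaleR_add_left)
  qed
  ultimately show ?thesis
    by simp
qed

lemma homogeneous_nonpos_degree_eq_0:
  fixes g :: "'a::real_normed_vector \<Rightarrow> 'b::real_normed_vector"
  assumes deriv: "\<And>x. (g has_derivative g' x) (at x)"
    and hom: "\<And>x. g x = h *\<^sub>R g' x x" and "h \<le> 0"
  shows "g x = 0"
proof (cases "h = 0")
  case True
  then show ?thesis using hom by simp
next
  case False
  define a where "a = - 1 / h"
  have a: "0 < a" "a * h = -1"
    using False \<open>h \<le> 0\<close> by (auto simp: a_def field_simps)
  define \<psi> where "\<psi> = (\<lambda>t. t powr a *\<^sub>R g (t *\<^sub>R x))"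
  \<comment> \<open>\<open>g\<close> is \<open>1/h\<close>-homogeneous along rays, so \<open>\<psi>\<close> is constant for \<open>t > 0\<close>; as \<open>a > 0\<close>, it tends to \<open>0\<close> at \<open>0\<close>.\<close>
  have "\<exists>c. \<forall>t\<in>{0<..}. \<psi> t = c"
    unfolding \<psi>_def
    by (rule has_derivative_zero_constant)
      (auto intro: has_derivative_at_withinI homogeneous_scaled_has_derivative_0[OF deriv hom a(2)])
  then obtain c where c: "\<And>t. t \<in> {0<..} \<Longrightarrow> \<psi> t = c"
    by blast
  then have "\<psi> t = g x" if "0 < t" for t
    using c[of t] c[of 1] that by (simp add: \<psi>_def)
  then have "\<forall>\<^sub>F t in at_right 0. g x = \<psi> t"
    using eventually_at_right_less[of "0::real"] by (auto elim: eventually_mono)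
  then have "(\<psi> \<longlongrightarrow> g x) (at_right 0)"
    by (rule Lim_transform_eventually[OF tendsto_const])
  moreover have "((\<lambda>t. t powr a) \<longlongrightarrow> 0) (at_right 0)"
    by (rule tendsto_zero_powrI[OF tendsto_ident_at tendsto_const _ a(1)])
      (use eventually_at_right_less[of "0::real"] in \<open>auto elim: eventually_mono\<close>)
  then have "(\<psi> \<longlongrightarrow> 0 *\<^sub>R g (0 *\<^sub>R x)) (at_right 0)"
    unfolding \<psi>_def
    by (intro tendsto_scaleR isCont_tendsto_compose[OF has_derivative_continuous[OF deriv]] tendsto_intros)
  ultimately show ?thesis
    using tendsto_unique[OF trivial_limit_at_right_real] by fastforce
qed

lemma homogeneous_eq_max_degree:
  fixes g :: "'a::real_normed_vector \<Rightarrow> 'b::real_normed_vector"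
  assumes deriv: "\<And>x. (g has_derivative g' x) (at x)"
    and hom: "\<And>x. g x = h *\<^sub>R g' x x"
  shows "g x = max h 0 *\<^sub>R g' x x"
  using homogeneous_nonpos_degree_eq_0[OF deriv hom] hom by (cases "h \<le> 0") auto

lemma lyapunov_has_real_derivative:
  fixes \<theta> :: "real \<Rightarrow> (real^'d1) \<times> (real^'d2)"
    and \<Phi> :: "real^'d1^'n" and Dg :: "real^'d2 \<Rightarrow> real^'d2^'n"
  assumes hom: "g (snd (\<theta> t)) = c *\<^sub>R (Dg (snd (\<theta> t)) *v snd (\<theta> t))"
    and flow: "(\<theta> has_vector_derivative
      (- (transpose \<Phi> *v z), - (transpose (Dg (snd (\<theta> t))) *v z))) (at t within S)"
  shows "((\<lambda>t. (fst (\<theta> t) - w) \<bullet> (fst (\<theta> t) - w) + c * (snd (\<theta> t) \<bullet> snd (\<theta> t)))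
      has_real_derivative - 2 * ((\<Phi> *v fst (\<theta> t) + g (snd (\<theta> t)) - \<Phi> *v w) \<bullet> z)) (at t within S)"
proof -
  define x1 where "x1 = fst (\<theta> t) - w"
  define x2 where "x2 = snd (\<theta> t)"
  define a1 where "a1 = - (transpose \<Phi> *v z)"
  define a2 where "a2 = - (transpose (Dg x2) *v z)"
  have d: "(\<theta> has_derivative (\<lambda>s. s *\<^sub>R (a1, a2))) (at t within S)"
    using flow by (simp add: has_vector_derivative_def a1_def a2_def x2_def)
  have d1: "((\<lambda>t. fst (\<theta> t) - w) has_derivative (\<lambda>s. s *\<^sub>R a1)) (at t within S)"
    using has_derivative_diff[OF has_derivative_fst[OF d] has_derivative_const[of w]] by simp
  have d2: "((\<lambda>t. snd (\<theta> t)) has_derivative (\<lambda>s. s *\<^sub>R a2)) (at t within S)"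
    using has_derivative_snd[OF d] by simp
  have deriv: "((\<lambda>t. (fst (\<theta> t) - w) \<bullet> (fst (\<theta> t) - w) + c * (snd (\<theta> t) \<bullet> snd (\<theta> t)))
      has_derivative (\<lambda>s. 2 * s * (x1 \<bullet> a1 + c * (x2 \<bullet> a2)))) (at t within S)"
    by (rule has_derivative_eq_rhs[OF has_derivative_add[OF has_derivative_inner[OF d1 d1]
          has_derivative_mult[OF has_derivative_const has_derivative_inner[OF d2 d2]]]])
      (simp add: x1_def x2_def inner_commute[of a1] inner_commute[of a2] algebra_simps)
  have "x1 \<bullet> a1 + c * (x2 \<bullet> a2) = - ((\<Phi> *v x1 + c *\<^sub>R (Dg x2 *v x2)) \<bullet> z)"
    by (simp add: a1_def a2_def inner_commute[of x1] inner_commute[of x2] dot_lmul_matrix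
        inner_commute[of z] inner_add_left)
  also have "\<Phi> *v x1 + c *\<^sub>R (Dg x2 *v x2) = \<Phi> *v fst (\<theta> t) + g (snd (\<theta> t)) - \<Phi> *v w"
    by (simp add: x1_def x2_def hom matrix_vector_mult_diff_distrib)
  finally have "(\<lambda>s. 2 * s * (x1 \<bullet> a1 + c * (x2 \<bullet> a2)))
      = (*) (- 2 * ((\<Phi> *v fst (\<theta> t) + g (snd (\<theta> t)) - \<Phi> *v w) \<bullet> z))"
    by (simp add: fun_eq_iff)
  with deriv show ?thesis
    by (simp add: has_field_derivative_def)
qed

lemma frequently_derivative_gt_if_nonneg:
  fixes L D :: "real \<Rightarrow> real"
  assumes nonneg: "\<And>t. 0 \<le> L t"
    and deriv: "\<And>t. 0 \<le> t \<Longrightarrow> (L has_real_derivative D t) (at t within {0..})"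
    and "0 < \<delta>"
  shows "\<exists>\<^sub>F t in at_top. - \<delta> < D t"
proof (rule ccontr)
  assume "\<not> (\<exists>\<^sub>F t in at_top. - \<delta> < D t)"
  then have "\<forall>\<^sub>F t in at_top. D t \<le> - \<delta>"
    by (simp add: not_frequently not_less)
  then obtain T0 where T0: "\<And>t. T0 \<le> t \<Longrightarrow> D t \<le> - \<delta>"
    by (auto simp: eventually_at_top_linorder)
  define T where "T = max T0 1"
  have mono: "L t + \<delta> * t \<le> L T + \<delta> * T" if "T \<le> t" for t
  proof (rule DERIV_nonpos_imp_nonincreasing[OF that])
    fix x
    assume x: "T \<le> x" "x \<le> t"
    then have "0 < x"
      by (simp add: T_def)
    then have "(L has_real_derivative D x) (at x within {0..})"
      by (intro deriv) simp
    then have "(L has_real_derivative D x) (at x within {0<..})"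
      by (rule has_field_derivative_subset) auto
    then have "(L has_real_derivative D x) (at x)"
      using at_within_open[of x "{0<..}"] \<open>0 < x\<close> by simp
    then have "((\<lambda>t. L t + \<delta> * t) has_real_derivative D x + \<delta>) (at x)"
      using DERIV_cmult_Id[of \<delta>] by (rule DERIV_add)
    moreover have "D x + \<delta> \<le> 0"
      using T0[of x] x by (simp add: T_def)
    ultimately show "\<exists>y. ((\<lambda>t. L t + \<delta> * t) has_real_derivative y) (at x) \<and> y \<le> 0"
      by blast
  qed
  define t1 where "t1 = T + L T / \<delta> + 1"
  have "T \<le> t1"
    using nonneg[of T] \<open>0 < \<delta>\<close> by (simp add: t1_def)
  moreover have "\<delta> * t1 = \<delta> * T + L T + \<delta>"
    using \<open>0 < \<delta>\<close> by (simp add: t1_def field_simps)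
  ultimately have "L t1 \<le> - \<delta>"
    using mono[of t1] by linarith
  then show False
    using nonneg[of t1] \<open>0 < \<delta>\<close> by linarith
qed

lemma Liminf_le_if_lyapunov:
  fixes L D x :: "real \<Rightarrow> real"
  assumes nonneg: "\<And>t. 0 \<le> L t"
    and deriv: "\<And>t. 0 \<le> t \<Longrightarrow> (L has_real_derivative D t) (at t within {0..})"
    and decay: "\<And>t. 0 \<le> t \<Longrightarrow> D t \<le> - (x t * (a * x t - b))"
    and "0 < a" "0 \<le> b"
  shows "Liminf at_top (\<lambda>t. ereal (x t)) \<le> ereal (b / a)"
proof (rule ccontr)
  assume "\<not> ?thesis"
  then have "ereal (b / a) < Liminf at_top (\<lambda>t. ereal (x t))"
    by simp
  then obtain y where "ereal (b / a) < ereal y" and "ereal y < Liminf at_top (\<lambda>t. ereal (x t))"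
    using ereal_dense2 by blast
  then have y: "b / a < y" and eventually_gt: "\<forall>\<^sub>F t in at_top. y < x t"
    by (auto dest: less_LiminfD)
  have "0 < a * y - b"
    using y \<open>0 < a\<close> by (simp add: field_simps)
  moreover have "0 < y"
    using y divide_nonneg_pos[OF \<open>0 \<le> b\<close> \<open>0 < a\<close>] by linarith
  ultimately have "0 < y * (a * y - b)"
    by simp
  then have "\<exists>\<^sub>F t in at_top. - (y * (a * y - b)) < D t"
    using frequently_derivative_gt_if_nonneg[of L D] nonneg deriv by blast
  moreover have "\<forall>\<^sub>F t in at_top. \<not> - (y * (a * y - b)) < D t"
    using eventually_gt eventually_ge_at_top[of 0]
  proof eventually_elim
    case (elim t)
    have "y * (a * y - b) \<le> x t * (a * x t - b)"
      using elim \<open>0 < y\<close> \<open>0 < a * y - b\<close> \<open>0 < a\<close> by (intro mult_mono) auto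
    then show ?case
      using decay[OF elim(2)] by linarith
  qed
  ultimately show False
    by (simp add: frequently_def)
qed

lemma td_flow_lyapunov_has_real_derivative:
  fixes \<theta> :: "real \<Rightarrow> (real^'d1) \<times> (real^'d2)"
    and \<Phi> :: "real^'d1^'n" and g :: "real^'d2 \<Rightarrow> real^'n" and Dg :: "real^'d2 \<Rightarrow> real^'d2^'n"
  assumes g_deriv: "\<And>x. (g has_derivative (\<lambda>v. Dg x *v v)) (at x)"
    and g_hom: "\<And>x. g x = h *\<^sub>R (Dg x *v x)"
    and flow: "(\<theta> has_vector_derivative
          (let A = diag_mat \<mu> ** (mat 1 - \<gamma> *\<^sub>R P);
               res = \<Phi> *v fst (\<theta> t) + g (snd (\<theta> t)) - Vstar
           in (- (transpose \<Phi> *v (A *v res)),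
               - (transpose (Dg (snd (\<theta> t))) *v (A *v res)))))
        (at t within S)"
    and e: "e = \<Phi> *v fst (\<theta> t) + g (snd (\<theta> t)) - Vstar"
  shows "((\<lambda>t. (fst (\<theta> t) - w) \<bullet> (fst (\<theta> t) - w) + max h 0 * (snd (\<theta> t) \<bullet> snd (\<theta> t)))
      has_real_derivative - 2 * inner_mu \<mu> (e + (Vstar - \<Phi> *v w)) (e - \<gamma> *\<^sub>R (P *v e)))
      (at t within S)"
proof -
  have "g (snd (\<theta> t)) = max h 0 *\<^sub>R (Dg (snd (\<theta> t)) *v snd (\<theta> t))"
    using homogeneous_eq_max_degree[where g' = "\<lambda>x v. Dg x *v v", OF g_deriv g_hom] by simp
  from lyapunov_has_real_derivative[where g = g and \<theta> = \<theta> and t = t and Dg = Dg,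
      OF this flow[unfolded Let_def]]
  have "((\<lambda>t. (fst (\<theta> t) - w) \<bullet> (fst (\<theta> t) - w) + max h 0 * (snd (\<theta> t) \<bullet> snd (\<theta> t)))
      has_real_derivative - 2 * ((\<Phi> *v fst (\<theta> t) + g (snd (\<theta> t)) - \<Phi> *v w) \<bullet>
        ((diag_mat \<mu> ** (mat 1 - \<gamma> *\<^sub>R P)) *v e))) (at t within S)"
    by (simp add: e)
  moreover have "\<Phi> *v fst (\<theta> t) + g (snd (\<theta> t)) - \<Phi> *v w = e + (Vstar - \<Phi> *v w)"
    by (simp add: e)
  ultimately show ?thesis
    by (simp add: inner_diag_mat_mult matrix_vector_mult_diff_rdistrib scaleR_matrix_vector_assoc)
qed

theorem corollary1:
  fixes P :: "real^'n^'n" and \<mu> :: "real^'n" and r :: "'n \<Rightarrow> 'n \<Rightarrow> real"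
    and \<gamma> :: real and Vstar :: "real^'n"
    and \<Phi> :: "real^'d1^'n" and g :: "real^'d2 \<Rightarrow> real^'n" and Dg :: "real^'d2 \<Rightarrow> real^'d2^'n"
    and h C ell :: real
    and \<theta> :: "real \<Rightarrow> (real^'d1) \<times> (real^'d2)"
  assumes stoch: "stochastic_matrix P"
    and irred: "irreducible_chain P"
    and aper: "aperiodic_chain P"
    and stat: "stationary_distribution P \<mu>"
    and gamma: "0 \<le> \<gamma>" "\<gamma> < 1"
    and Vstar: "Vstar = (\<chi> s. \<Sum>s'\<in>UNIV. P $ s $ s' * r s s') + \<gamma> *\<^sub>R (P *v Vstar)"
    and rank: "rank \<Phi> = min CARD('n) CARD('d1)"
    and g_deriv: "\<And>x. (g has_derivative (\<lambda>v. Dg x *v v)) (at x)"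
    and g_C1: "continuous_on UNIV Dg"
    and g_hom: "\<And>x. g x = h *\<^sub>R (Dg x *v x)"
    and C: "C > 0" and ell: "ell > 0"
    and growth: "\<And>\<theta>1 \<theta>2. norm_mu \<mu> (\<Phi> *v \<theta>1 + g \<theta>2) \<le> C * norm (\<theta>1, \<theta>2) powr ell"
    and ode: "\<And>t. t \<ge> 0 \<Longrightarrow>
       (\<theta> has_vector_derivative
          (let A = diag_mat \<mu> ** (mat 1 - \<gamma> *\<^sub>R P);
               res = \<Phi> *v fst (\<theta> t) + g (snd (\<theta> t)) - Vstar
           in (- (transpose \<Phi> *v (A *v res)),
               - (transpose (Dg (snd (\<theta> t))) *v (A *v res)))))
        (at t within {0..})"
  shows "Liminf at_top (\<lambda>t. ereal (norm_mu \<mu> (\<Phi> *v fst (\<theta> t) + g (snd (\<theta> t)) - Vstar)))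
         \<le> ereal ((1 + (1 + \<gamma>) / (1 - \<gamma>)) * norm_mu \<mu> (Vstar - proj_mu \<mu> \<Phi> Vstar))"
proof -
  have mu_pos: "\<forall>i. 0 < \<mu> $ i"
    using stationary_distribution_pos[OF stoch irred stat] by blast
  obtain w where w: "proj_mu \<mu> \<Phi> Vstar = \<Phi> *v w"
    using proj_mu_in_range[OF mu_pos] by blast
  define e where "e t = \<Phi> *v fst (\<theta> t) + g (snd (\<theta> t)) - Vstar" for t
  define n where "n = norm_mu \<mu> (Vstar - \<Phi> *v w)"
  define L where "L = (\<lambda>t. (fst (\<theta> t) - w) \<bullet> (fst (\<theta> t) - w) + max h 0 * (snd (\<theta> t) \<bullet> snd (\<theta> t)))"
  define D where "D = (\<lambda>t. - 2 * inner_mu \<mu> (e t + (Vstar - \<Phi> *v w)) (e t - \<gamma> *\<^sub>R (P *v e t)))"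
  have "(L has_real_derivative D t) (at t within {0..})" if "0 \<le> t" for t
    unfolding L_def D_def by (rule td_flow_lyapunov_has_real_derivative[OF g_deriv g_hom ode[OF that] e_def])
  moreover have "D t \<le> - (norm_mu \<mu> (e t) * (2 * (1 - \<gamma>) * norm_mu \<mu> (e t) - 2 * (1 + \<gamma>) * n))" for t
    using inner_mu_discounted_diff_ge[OF stoch stat gamma(1), of "e t" "Vstar - \<Phi> *v w"]
    by (simp add: D_def n_def algebra_simps)
  moreover have "0 \<le> L t" for t
    by (simp add: L_def)
  moreover have "0 \<le> n"
    using mu_pos by (simp add: n_def norm_mu_nonneg less_imp_le)
  ultimately have "Liminf at_top (\<lambda>t. ereal (norm_mu \<mu> (e t))) \<le> ereal (2 * (1 + \<gamma>) * n / (2 * (1 - \<gamma>)))"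
    using gamma by (intro Liminf_le_if_lyapunov[of L D]) auto
  also have "\<dots> = ereal ((1 + \<gamma>) / (1 - \<gamma>) * n)"
    using gamma by (simp add: field_simps)
  also have "\<dots> \<le> ereal ((1 + (1 + \<gamma>) / (1 - \<gamma>)) * n)"
    using \<open>0 \<le> n\<close> by (simp add: distrib_right)
  finally show ?thesis
    by (simp add: e_def n_def w)
qed

end
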